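(* Under the hypotheses of Theorem 1 with $R(\delta\theta)=\|\delta\theta\|_1$ on $\mathbb{R}^{p^2}$, there is a constant $\eta_2>0$ such that with high probability $$\|\nabla\mathcal{L}(\delta\theta^*;\mathfrak{X}_1^{n_1},\mathfrak{X}_2^{n_2})\|_\infty\le\frac{\eta_2\sqrt{\log p}}{\sqrt{\min(n_1,n_2)}}.$$
   Context: Theorem 1 refers to: Ising models $P(\mathbf{x}\mid\theta)\propto\exp\{\langle\theta,T(\mathbf{x})\rangle\}$ on $\{-1,1\}^p$ with $T(\mathbf{x})=(x_sx_t)_{s,t=1}^p$; samples $\{\mathbf x^1_i\}_{i=1}^{n_1}$ i.i.d. from $P(\cdot\mid\theta_1^* )$ and $\{\mathbf x^2_i\}_{i=1}^{n_2}$ i.i.d. from $P(\cdot\mid\theta_2^* )$, independent; $\delta\theta^*=\theta_1^*-\theta_2^*$; $Z(\delta\theta)=E_{X\sim P(\cdot\mid\theta_2^* )}[\exp\{\langle T(X),\delta\theta\rangle\}]$, $r(\mathbf{x}\mid\delta\theta)=\exp\{\langle T(\mathbf{x}),\delta\theta\rangle\}/Z(\delta\theta)$; loss $\mathcal{L}(\delta\theta)=-\frac1{n_1}\sum_i\langle T(\mathbf x_i^1),\delta\theta\rangle+\log\frac1{n_2}\sum_i\exp\{\langle T(\mathbf x_i^2),\delta\theta\rangle\}$; smooth density ratio assumption: for all $\mathbf u$ with $\|\mathbf u\|_2\le\|\delta\theta^*\|_2$ and $\epsilon\in\mathbb R$, $E_{X\sim P(\cdot\mid\theta_2^* )}[\exp\{\epsilon(r(X\mid\delta\theta^*+\mathbf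 u)-1)\}]\le e^{\epsilon^2}$; and the eigenvalue bound $\frac12\lambda_{\max}(\nabla^2\mathcal{L}(\delta\theta^*+\mathbf u))\le\eta_0$ for all $\|\mathbf u\|_2\le\|\delta\theta^*\|_2$. *)

theory Defs
  imports "HOL-Analysis.Analysis"
begin

text \<open>Spin configurations in {-1,1}^p, represented as functions nat => real that are
  +-1 on {..<p} and 0 elsewhere (so the configuration set is finite).\<close>

type_synonym config = "nat \<Rightarrow> real"
type_synonym param = "nat \<times> nat \<Rightarrow> real"

definition idx :: "nat \<Rightarrow> (nat \<times> nat) set" where
  "idx p = {..<p} \<times> {..<p}"

definition configs :: "nat \<Rightarrow> config set" where
  "configs p = {x. (\<forall>s<p. x s = -1 \<or> x s = 1) \<and> (\<forall>s\<ge>p. x s = 0)}"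

definition suffT :: "config \<Rightarrow> param" where
  "suffT x = (\<lambda>(s,t). x s * x t)"

definition ip :: "nat \<Rightarrow> param \<Rightarrow> param \<Rightarrow> real" where
  "ip p a b = (\<Sum>i\<in>idx p. a i * b i)"

definition norm2 :: "nat \<Rightarrow> param \<Rightarrow> real" where
  "norm2 p u = sqrt (\<Sum>i\<in>idx p. (u i)^2)"

definition supnorm :: "nat \<Rightarrow> param \<Rightarrow> real" where
  "supnorm p g = Max ((\<lambda>i. \<bar>g i\<bar>) ` idx p)"

definition ising :: "nat \<Rightarrow> param \<Rightarrow> config \<Rightarrow> real" where
  "ising p \<theta> x = exp (ip p \<theta> (suffT x)) / (\<Sum>y\<in>configs p. exp (ip p \<theta> (suffT y)))"

definition Eising :: "nat \<Rightarrow> param \<Rightarrow> (config \<Rightarrow> real) \<Rightarrow> real" where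
  "Eising p \<theta> f = (\<Sum>x\<in>configs p. ising p \<theta> x * f x)"

definition Zr :: "nat \<Rightarrow> param \<Rightarrow> param \<Rightarrow> real" where
  "Zr p \<theta>2 d = Eising p \<theta>2 (\<lambda>x. exp (ip p (suffT x) d))"

definition ratio :: "nat \<Rightarrow> param \<Rightarrow> param \<Rightarrow> config \<Rightarrow> real" where
  "ratio p \<theta>2 d x = exp (ip p (suffT x) d) / Zr p \<theta>2 d"

definition smooth_ratio :: "nat \<Rightarrow> param \<Rightarrow> param \<Rightarrow> bool" where
  "smooth_ratio p \<theta>1 \<theta>2 \<longleftrightarrow>
     (\<forall>(u::param) (\<epsilon>::real). norm2 p u \<le> norm2 p (\<lambda>i. \<theta>1 i - \<theta>2 i) \<longrightarrow>
        Eising p \<theta>2 (\<lambda>x. exp (\<epsilon> * (ratio p \<theta>2 (\<lambda>i. \<theta>1 i - \<theta>2 i + u i) x - 1)))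
          \<le> exp (\<epsilon>^2))"

definition lossL :: "nat \<Rightarrow> nat \<Rightarrow> nat \<Rightarrow> (nat \<Rightarrow> config) \<Rightarrow> (nat \<Rightarrow> config) \<Rightarrow> param \<Rightarrow> real" where
  "lossL p n1 n2 X1 X2 d =
     - (1 / real n1) * (\<Sum>i<n1. ip p (suffT (X1 i)) d)
     + ln ((1 / real n2) * (\<Sum>i<n2. exp (ip p (suffT (X2 i)) d)))"

definition grad :: "(param \<Rightarrow> real) \<Rightarrow> param \<Rightarrow> param" where
  "grad f d = (\<lambda>j. deriv (\<lambda>h::real. f (\<lambda>i. d i + h * (if i = j then 1 else 0))) 0)"

definition hess :: "(param \<Rightarrow> real) \<Rightarrow> param \<Rightarrow> (nat \<times> nat) \<Rightarrow> (nat \<times> nat) \<Rightarrow> real" where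
  "hess f d j k = deriv (\<lambda>a::real. deriv (\<lambda>b::real.
      f (\<lambda>i. d i + a * (if i = j then 1 else 0) + b * (if i = k then 1 else 0))) 0) 0"

definition lambda_max :: "'i set \<Rightarrow> ('i \<Rightarrow> 'i \<Rightarrow> real) \<Rightarrow> real" where
  "lambda_max I H = Sup {\<mu>. \<exists>v. (\<exists>k\<in>I. v k \<noteq> 0) \<and> (\<forall>j\<in>I. (\<Sum>k\<in>I. H j k * v k) = \<mu> * v j)}"

definition samples :: "nat \<Rightarrow> nat \<Rightarrow> (nat \<Rightarrow> config) set" where
  "samples p n = PiE {..<n} (\<lambda>_. configs p)"

definition prob_samples :: "nat \<Rightarrow> param \<Rightarrow> param \<Rightarrow> nat \<Rightarrow> nat
     \<Rightarrow> ((nat \<Rightarrow> config) \<Rightarrow> (nat \<Rightarrow> config) \<Rightarrow> bool) \<Rightarrow> real" where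
  "prob_samples p \<theta>1 \<theta>2 n1 n2 E =
     (\<Sum>X1\<in>samples p n1. \<Sum>X2\<in>samples p n2.
        (if E X1 X2 then (\<Prod>i<n1. ising p \<theta>1 (X1 i)) * (\<Prod>i<n2. ising p \<theta>2 (X2 i)) else 0))"

end

theory Submission
  imports Defs
begin

text \<open>The j-th coordinate of the gradient at the true difference is
  \<open>-(1/n1) \<Sum> T_j(x1_i) + \<Sum> r(x2_i) T_j(x2_i) / \<Sum> r(x2_i)\<close>, where \<open>r\<close> is the exact
  density ratio \<open>P(.|\<theta>1)/P(.|\<theta>2)\<close>. Both terms are estimators of \<open>\<mu>_j = E_\<theta>1 T_j\<close>:
  the first is an average of bounded variables, and in the second the numerator deviation
  \<open>\<Sum> r(x2_i)(T_j(x2_i) - \<mu>_j)\<close> has mean zero under \<open>P(.|\<theta>2)\<close>, while the denominator exceeds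
  \<open>n2/2\<close> with high probability. The smooth density ratio assumption, used only at \<open>u = 0\<close>,
  supplies the exponential moments of \<open>r\<close> needed for Chernoff bounds on both; a union bound over
  the \<open>p\<^sup>2\<close> coordinates at deviation \<open>60 sqrt(log p / n_k)\<close> then fails with probability
  at most \<open>5/p\<close>.\<close>

section \<open>Independent draws from a finite distribution\<close>

definition iid_prob :: "'a set \<Rightarrow> ('a \<Rightarrow> real) \<Rightarrow> nat \<Rightarrow> ((nat \<Rightarrow> 'a) \<Rightarrow> bool) \<Rightarrow> real" where
  "iid_prob C w n A = (\<Sum>X\<in>PiE {..<n} (\<lambda>_. C). if A X then (\<Prod>i<n. w (X i)) else 0)"

lemma prod_weights_nonneg:
  fixes w :: "'a \<Rightarrow> real"
  assumes "\<forall>x\<in>C. 0 \<le> w x" "X \<in> PiE {..<n} (\<lambda>_. C)"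
  shows "0 \<le> (\<Prod>i<n. w (X i))"
  using assms by (intro prod_nonneg) (auto simp: PiE_iff)

lemma iid_prob_nonneg:
  assumes "\<forall>x\<in>C. 0 \<le> w x"
  shows "0 \<le> iid_prob C w n A"
  unfolding iid_prob_def using prod_weights_nonneg[OF assms] by (intro sum_nonneg) auto

lemma iid_prob_True:
  assumes "finite C" "sum w C = 1"
  shows "iid_prob C w n (\<lambda>_. True) = 1"
proof -
  have "(\<Prod>i<n. \<Sum>y\<in>C. w y) = (\<Sum>X\<in>PiE {..<n} (\<lambda>_. C). \<Prod>i<n. w (X i))"
    by (rule prod_sum_PiE) (use assms in auto)
  then show ?thesis using assms by (simp add: iid_prob_def)
qed

lemma iid_prob_compl:
  assumes "finite C" "sum w C = 1"
  shows "iid_prob C w n (\<lambda>X. \<not> A X) = 1 - iid_prob C w n A"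
proof -
  have "iid_prob C w n A + iid_prob C w n (\<lambda>X. \<not> A X) = iid_prob C w n (\<lambda>_. True)"
    unfolding iid_prob_def sum.distrib[symmetric] by (intro sum.cong) auto
  then show ?thesis using iid_prob_True[OF assms] by simp
qed

lemma iid_prob_mono:
  assumes "\<forall>x\<in>C. 0 \<le> w x" "\<And>X. X \<in> PiE {..<n} (\<lambda>_. C) \<Longrightarrow> A X \<Longrightarrow> B X"
  shows "iid_prob C w n A \<le> iid_prob C w n B"
  unfolding iid_prob_def using prod_weights_nonneg[OF assms(1)] assms(2)
  by (intro sum_mono) auto

lemma iid_prob_disj_le:
  assumes "\<forall>x\<in>C. 0 \<le> w x"
  shows "iid_prob C w n (\<lambda>X. A X \<or> B X) \<le> iid_prob C w n A + iid_prob C w n B"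
  unfolding iid_prob_def sum.distrib[symmetric] using prod_weights_nonneg[OF assms]
  by (intro sum_mono) auto

lemma iid_prob_Bex_le:
  assumes "\<forall>x\<in>C. 0 \<le> w x" "finite J"
  shows "iid_prob C w n (\<lambda>X. \<exists>j\<in>J. A j X) \<le> (\<Sum>j\<in>J. iid_prob C w n (A j))"
proof -
  have "(if \<exists>j\<in>J. A j X then \<Prod>i<n. w (X i) else 0) \<le> (\<Sum>j\<in>J. if A j X then \<Prod>i<n. w (X i) else 0)"
    if X: "X \<in> PiE {..<n} (\<lambda>_. C)" for X
  proof (cases "\<exists>j\<in>J. A j X")
    case True
    then obtain j where "j \<in> J" "A j X" by blast
    then have "(if A j X then \<Prod>i<n. w (X i) else 0) \<le> (\<Sum>j\<in>J. if A j X then \<Prod>i<n. w (X i) else 0)"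
      using prod_weights_nonneg[OF assms(1) X] assms(2) by (intro member_le_sum) auto
    with True \<open>A j X\<close> show ?thesis by simp
  next
    case False
    then show ?thesis using prod_weights_nonneg[OF assms(1) X] by (simp add: sum_nonneg)
  qed
  then have "iid_prob C w n (\<lambda>X. \<exists>j\<in>J. A j X)
      \<le> (\<Sum>X\<in>PiE {..<n} (\<lambda>_. C). \<Sum>j\<in>J. if A j X then \<Prod>i<n. w (X i) else 0)"
    unfolding iid_prob_def by (intro sum_mono) auto
  also have "\<dots> = (\<Sum>j\<in>J. iid_prob C w n (A j))"
    unfolding iid_prob_def by (rule sum.swap)
  finally show ?thesis .
qed

section \<open>Chernoff bounds\<close>

lemma exp_le_second_order: "exp (x::real) \<le> 1 + x + x^2 * exp \<bar>x\<bar> / 2"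
proof -
  obtain t where t: "\<bar>t\<bar> \<le> \<bar>x\<bar>" "exp x = (\<Sum>m<2. x ^ m / fact m) + exp t / fact 2 * x ^ 2"
    using Maclaurin_exp_le[of x 2] by blast
  have "exp t * x^2 \<le> exp \<bar>x\<bar> * x^2"
    using t(1) by (intro mult_right_mono) auto
  then show ?thesis using t(2) by (simp add: numeral_2_eq_2 mult.commute)
qed

lemma half_square_le_exp:
  assumes "0 \<le> (y::real)"
  shows "y^2 / 2 \<le> exp y"
proof -
  obtain t where "exp y = (\<Sum>m<3. y ^ m / fact m) + exp t / fact 3 * y ^ 3"
    using Maclaurin_exp_le[of y 3] by blast
  moreover have "(\<Sum>m<3. y ^ m / fact m) = 1 + y + y^2/2"
    by (simp add: numeral_3_eq_3 numeral_2_eq_2)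
  ultimately show ?thesis using assms by simp
qed

lemma mgf_le_exp_square:
  fixes f w :: "'a \<Rightarrow> real"
  assumes w: "\<forall>x\<in>C. 0 \<le> w x" and w1: "sum w C = 1"
    and mean: "(\<Sum>x\<in>C. w x * f x) = 0"
    and moment: "(\<Sum>x\<in>C. w x * ((f x)^2 * exp \<bar>l * f x\<bar>)) \<le> 2 * K"
  shows "(\<Sum>x\<in>C. w x * exp (l * f x)) \<le> exp (K * l^2)"
proof -
  have "(\<Sum>x\<in>C. w x * exp (l * f x))
      \<le> (\<Sum>x\<in>C. w x * (1 + l * f x + l^2 * ((f x)^2 * exp \<bar>l * f x\<bar>) / 2))"
  proof (intro sum_mono mult_left_mono)
    fix x
    show "exp (l * f x) \<le> 1 + l * f x + l^2 * ((f x)^2 * exp \<bar>l * f x\<bar>) / 2"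
      using exp_le_second_order[of "l * f x"] by (simp add: power_mult_distrib mult.assoc)
  qed (use w in auto)
  also have "\<dots> = sum w C + l * (\<Sum>x\<in>C. w x * f x)
      + l^2 / 2 * (\<Sum>x\<in>C. w x * ((f x)^2 * exp \<bar>l * f x\<bar>))"
    by (simp add: algebra_simps sum.distrib sum_distrib_left sum_divide_distrib)
  also have "\<dots> \<le> 1 + K * l^2"
    using w1 mean mult_left_mono[OF moment, of "l^2/2"] by (simp add: mult.commute mult.left_commute)
  also have "\<dots> \<le> exp (K * l^2)"
    using exp_ge_add_one_self[of "K * l^2"] by (simp add: add.commute)
  finally show ?thesis .
qed

lemma chernoff_upper_tail:
  assumes C: "finite C" and w: "\<forall>x\<in>C. 0 \<le> w x" and K: "0 < K" and s: "0 \<le> s"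
    and mgf: "(\<Sum>x\<in>C. w x * exp (s / (2*K) * f x)) \<le> exp (K * (s / (2*K))^2)"
  shows "iid_prob C w n (\<lambda>X. real n * s \<le> (\<Sum>i<n. f (X i))) \<le> exp (- real n * s^2 / (4*K))"
proof -
  define l where "l = s / (2*K)"
  have l: "0 \<le> l" using K s by (simp add: l_def)
  have "(if real n * s \<le> (\<Sum>i<n. f (X i)) then \<Prod>i<n. w (X i) else 0)
      \<le> (\<Prod>i<n. w (X i) * exp (l * f (X i))) * exp (- l * real n * s)"
    if X: "X \<in> PiE {..<n} (\<lambda>_. C)" for X
  proof -
    have markov: "(\<Prod>i<n. w (X i) * exp (l * f (X i))) * exp (- l * real n * s)
        = (\<Prod>i<n. w (X i)) * exp (l * ((\<Sum>i<n. f (X i)) - real n * s))"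
      by (simp add: prod.distrib exp_sum[symmetric] sum_distrib_left exp_add[symmetric] algebra_simps)
    have "(if real n * s \<le> (\<Sum>i<n. f (X i)) then 1 else 0) \<le> exp (l * ((\<Sum>i<n. f (X i)) - real n * s))"
      using l by auto
    from mult_left_mono[OF this prod_weights_nonneg[OF w X]] show ?thesis
      unfolding markov by (simp split: if_splits)
  qed
  then have "iid_prob C w n (\<lambda>X. real n * s \<le> (\<Sum>i<n. f (X i)))
      \<le> (\<Sum>X\<in>PiE {..<n} (\<lambda>_. C). (\<Prod>i<n. w (X i) * exp (l * f (X i))) * exp (- l * real n * s))"
    unfolding iid_prob_def by (intro sum_mono)
  also have "\<dots> = (\<Prod>i<n. \<Sum>y\<in>C. w y * exp (l * f y)) * exp (- l * real n * s)"
    by (subst prod_sum_PiE[where B="\<lambda>_. C"]) (use C in \<open>auto simp: sum_distrib_right\<close>)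
  also have "\<dots> \<le> exp (K * l^2) ^ n * exp (- l * real n * s)"
    using mgf w unfolding l_def[symmetric]
    by (intro mult_right_mono) (auto intro!: power_mono sum_nonneg)
  also have "\<dots> = exp (- real n * s^2 / (4*K))"
    using K by (simp add: exp_of_nat_mult[symmetric] exp_add[symmetric] l_def power2_eq_square field_simps)
  finally show ?thesis .
qed

lemma chernoff_abs_tail:
  fixes f w :: "'a \<Rightarrow> real"
  assumes C: "finite C" and w: "\<forall>x\<in>C. 0 \<le> w x" and w1: "sum w C = 1" and K: "0 < K" and s: "0 \<le> s"
    and mean: "(\<Sum>x\<in>C. w x * f x) = 0"
    and moment: "(\<Sum>x\<in>C. w x * ((f x)^2 * exp \<bar>s / (2*K) * f x\<bar>)) \<le> 2 * K"
  shows "iid_prob C w n (\<lambda>X. real n * s \<le> \<bar>\<Sum>i<n. f (X i)\<bar>) \<le> 2 * exp (- real n * s^2 / (4*K))"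
proof -
  have mean': "(\<Sum>x\<in>C. w x * - f x) = 0" using mean by (simp add: sum_negf)
  have moment': "(\<Sum>x\<in>C. w x * ((- f x)^2 * exp \<bar>s / (2*K) * - f x\<bar>)) \<le> 2 * K"
    using moment by simp
  have "iid_prob C w n (\<lambda>X. real n * s \<le> \<bar>\<Sum>i<n. f (X i)\<bar>)
      \<le> iid_prob C w n (\<lambda>X. real n * s \<le> (\<Sum>i<n. f (X i)) \<or> real n * s \<le> (\<Sum>i<n. - f (X i)))"
    by (intro iid_prob_mono[OF w]) (simp add: sum_negf, arith)
  also have "\<dots> \<le> iid_prob C w n (\<lambda>X. real n * s \<le> (\<Sum>i<n. f (X i)))
      + iid_prob C w n (\<lambda>X. real n * s \<le> (\<Sum>i<n. - f (X i)))"
    by (rule iid_prob_disj_le[OF w])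
  also have "\<dots> \<le> 2 * exp (- real n * s^2 / (4*K))"
    using chernoff_upper_tail[OF C w K s mgf_le_exp_square[OF w w1 mean moment], of n]
      chernoff_upper_tail[OF C w K s mgf_le_exp_square[OF w w1 mean' moment'], of n]
    by simp
  finally show ?thesis .
qed

lemma uniform_chernoff_abs_tail:
  fixes f :: "'j \<Rightarrow> 'a \<Rightarrow> real"
  assumes C: "finite C" and w: "\<forall>x\<in>C. 0 \<le> w x" and w1: "sum w C = 1" and J: "finite J"
    and K: "0 < K" and s: "0 \<le> s"
    and mean: "\<And>j. j \<in> J \<Longrightarrow> (\<Sum>x\<in>C. w x * f j x) = 0"
    and moment: "\<And>j. j \<in> J \<Longrightarrow> (\<Sum>x\<in>C. w x * ((f j x)^2 * exp \<bar>s / (2*K) * f j x\<bar>)) \<le> 2 * K"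
  shows "iid_prob C w n (\<lambda>X. \<exists>j\<in>J. real n * s \<le> \<bar>\<Sum>i<n. f j (X i)\<bar>)
    \<le> real (card J) * (2 * exp (- real n * s^2 / (4*K)))"
proof -
  have "iid_prob C w n (\<lambda>X. \<exists>j\<in>J. real n * s \<le> \<bar>\<Sum>i<n. f j (X i)\<bar>)
      \<le> (\<Sum>j\<in>J. iid_prob C w n (\<lambda>X. real n * s \<le> \<bar>\<Sum>i<n. f j (X i)\<bar>))"
    by (rule iid_prob_Bex_le[OF w J])
  also have "\<dots> \<le> real (card J) * (2 * exp (- real n * s^2 / (4*K)))"
    using chernoff_abs_tail[OF C w w1 K s mean moment] by (rule sum_bounded_above)
  finally show ?thesis .
qed

lemma finite_configs: "finite (configs p)"
proof -
  have "inj_on (\<lambda>x. restrict x {..<p}) (configs p)"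
  proof (rule inj_onI, rule ext)
    fix x y s assume xy: "x \<in> configs p" "y \<in> configs p" "restrict x {..<p} = restrict y {..<p}"
    show "x s = y s"
      using fun_cong[OF xy(3), of s] xy(1,2) by (cases "s < p") (auto simp: configs_def)
  qed
  moreover have "(\<lambda>x. restrict x {..<p}) ` configs p \<subseteq> PiE {..<p} (\<lambda>_. {-1,1})"
    by (auto simp: configs_def PiE_iff split: if_splits)
  then have "finite ((\<lambda>x. restrict x {..<p}) ` configs p)"
    by (rule finite_subset) (auto intro!: finite_PiE)
  ultimately show ?thesis using finite_imageD by blast
qed

lemma configs_nonempty: "configs p \<noteq> {}"
proof -
  have "(\<lambda>s. if s < p then 1 else 0) \<in> configs p" by (auto simp: configs_def)
  then show ?thesis by blast
qed

lemma abs_suffT_le_1: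
  assumes "x \<in> configs p" "j \<in> idx p"
  shows "\<bar>suffT x j\<bar> \<le> 1"
proof -
  obtain s t where j: "j = (s,t)" "s < p" "t < p" using assms(2) by (auto simp: idx_def)
  have "\<bar>x s\<bar> = 1" "\<bar>x t\<bar> = 1" using assms(1) j by (auto simp: configs_def)
  then show ?thesis using j by (simp add: suffT_def abs_mult)
qed

lemma finite_idx: "finite (idx p)"
  by (simp add: idx_def)

lemma card_idx: "card (idx p) = p^2"
  by (simp add: idx_def card_cartesian_product power2_eq_square)

lemma supnorm_le:
  assumes "1 \<le> p" "\<forall>j\<in>idx p. \<bar>g j\<bar> \<le> b"
  shows "supnorm p g \<le> b"
proof -
  have "(0,0) \<in> idx p" using assms(1) by (simp add: idx_def)
  then have "idx p \<noteq> {}" by blast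
  then show ?thesis using assms(2) by (simp add: supnorm_def idx_def Max_le_iff)
qed

definition ising_partition :: "nat \<Rightarrow> param \<Rightarrow> real" where
  "ising_partition p \<theta> = (\<Sum>y\<in>configs p. exp (ip p \<theta> (suffT y)))"

lemma ising_eq: "ising p \<theta> x = exp (ip p \<theta> (suffT x)) / ising_partition p \<theta>"
  by (simp add: ising_def ising_partition_def)

lemma ising_partition_pos: "0 < ising_partition p \<theta>"
  unfolding ising_partition_def using finite_configs configs_nonempty by (intro sum_pos) auto

lemma ising_pos: "0 < ising p \<theta> x"
  using ising_partition_pos[of p \<theta>] by (simp add: ising_eq)

lemma ising_nonneg: "\<forall>x\<in>configs p. 0 \<le> ising p \<theta> x"
  using ising_pos less_imp_le by blast

lemma sum_ising: "sum (ising p \<theta>) (configs p) = 1"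
  using ising_partition_pos[of p \<theta>]
  by (simp add: ising_eq sum_divide_distrib[symmetric] ising_partition_def)

lemma abs_Eising_le_1:
  assumes "\<forall>x\<in>configs p. \<bar>f x\<bar> \<le> 1"
  shows "\<bar>Eising p \<theta> f\<bar> \<le> 1"
proof -
  have "\<bar>Eising p \<theta> f\<bar> \<le> (\<Sum>x\<in>configs p. \<bar>ising p \<theta> x * f x\<bar>)"
    unfolding Eising_def by (rule sum_abs)
  also have "\<dots> \<le> (\<Sum>x\<in>configs p. ising p \<theta> x * 1)"
    using assms ising_pos[of p \<theta>] by (intro sum_mono) (simp add: abs_mult mult_left_mono less_imp_le)
  also have "\<dots> = 1" using sum_ising by simp
  finally show ?thesis .
qed

lemma abs_centered_suffT_le_2:
  assumes "x \<in> configs p" "j \<in> idx p"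
  shows "\<bar>suffT x j - Eising p \<theta> (\<lambda>x. suffT x j)\<bar> \<le> 2"
proof -
  have "\<bar>Eising p \<theta> (\<lambda>x. suffT x j)\<bar> \<le> 1"
    using abs_suffT_le_1[OF _ assms(2)] by (intro abs_Eising_le_1) auto
  then show ?thesis
    using abs_suffT_le_1[OF assms] abs_triangle_ineq4[of "suffT x j" "Eising p \<theta> (\<lambda>x. suffT x j)"]
    by linarith
qed

lemma Eising_centered: "(\<Sum>x\<in>configs p. ising p \<theta> x * (f x - Eising p \<theta> f)) = 0"
  using sum_ising[of p \<theta>]
  by (simp add: Eising_def right_diff_distrib sum_subtractf sum_distrib_right[symmetric])

lemma ip_suffT_diff:
  "ip p \<theta>2 (suffT x) + ip p (suffT x) (\<lambda>i. \<theta>1 i - \<theta>2 i) = ip p \<theta>1 (suffT x)"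
  unfolding ip_def sum.distrib[symmetric] by (intro sum.cong) (auto simp: algebra_simps)

lemma Zr_diff: "Zr p \<theta>2 (\<lambda>i. \<theta>1 i - \<theta>2 i) = ising_partition p \<theta>1 / ising_partition p \<theta>2"
proof -
  have "Zr p \<theta>2 (\<lambda>i. \<theta>1 i - \<theta>2 i)
      = (\<Sum>x\<in>configs p. exp (ip p \<theta>1 (suffT x)) / ising_partition p \<theta>2)"
    unfolding Zr_def Eising_def ising_eq
    by (intro sum.cong refl) (simp add: exp_add[symmetric] ip_suffT_diff)
  then show ?thesis by (simp add: ising_partition_def sum_divide_distrib)
qed

lemma ising_mult_ratio:
  "ising p \<theta>2 x * ratio p \<theta>2 (\<lambda>i. \<theta>1 i - \<theta>2 i) x = ising p \<theta>1 x"
  using ising_partition_pos[of p \<theta>1] ising_partition_pos[of p \<theta>2]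
  by (simp add: ising_eq ratio_def Zr_diff exp_add[symmetric] ip_suffT_diff)

lemma Zr_pos: "0 < Zr p \<theta>2 d"
  unfolding Zr_def Eising_def using finite_configs configs_nonempty ising_pos
  by (intro sum_pos) auto

lemma ratio_pos: "0 < ratio p \<theta>2 d x"
  using Zr_pos by (simp add: ratio_def)

section \<open>The gradient of the loss\<close>

lemma ip_add_coordinate:
  assumes "j \<in> idx p"
  shows "ip p (suffT x) (\<lambda>i. d i + h * (if i = j then 1 else 0)) = ip p (suffT x) d + h * suffT x j"
proof -
  have "ip p (suffT x) (\<lambda>i. d i + h * (if i = j then 1 else 0))
      = ip p (suffT x) d + h * (\<Sum>i\<in>idx p. if i = j then suffT x i else 0)"
  proof -
    have "(\<Sum>i\<in>idx p. suffT x i * (d i + h * (if i = j then 1 else 0)))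
        = (\<Sum>i\<in>idx p. suffT x i * d i + h * (if i = j then suffT x i else 0))"
      by (intro sum.cong) (auto simp: algebra_simps)
    then show ?thesis unfolding ip_def by (simp add: sum.distrib sum_distrib_left)
  qed
  then show ?thesis using assms by (simp add: idx_def)
qed

lemma has_real_derivative_ln_mean_exp:
  fixes c e :: "nat \<Rightarrow> real"
  assumes "1 \<le> n"
  shows "((\<lambda>h. ln (1 / real n * (\<Sum>i<n. exp (c i + h * e i)))) has_real_derivative
    (\<Sum>i<n. exp (c i) * e i) / (\<Sum>i<n. exp (c i))) (at 0)"
proof -
  have pos: "0 < (\<Sum>i<n. exp (c i))"
    using assms by (intro sum_pos) (auto simp: lessThan_empty_iff)
  have "((\<lambda>h. 1 / real n * (\<Sum>i<n. exp (c i + h * e i))) has_real_derivative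
      1 / real n * (\<Sum>i<n. exp (c i) * e i)) (at 0)"
    by (intro DERIV_cmult DERIV_sum) (auto intro!: derivative_eq_intros)
  from DERIV_chain2[OF DERIV_ln_divide this] show ?thesis
    using pos assms by simp
qed

lemma grad_lossL:
  assumes j: "j \<in> idx p" and n2: "1 \<le> n2"
  shows "grad (lossL p n1 n2 X1 X2) d j =
     - (1 / real n1) * (\<Sum>i<n1. suffT (X1 i) j)
     + (\<Sum>i<n2. exp (ip p (suffT (X2 i)) d) * suffT (X2 i) j) / (\<Sum>i<n2. exp (ip p (suffT (X2 i)) d))"
proof -
  have linear: "((\<lambda>h. \<Sum>i<n1. ip p (suffT (X1 i)) d + h * suffT (X1 i) j)
      has_real_derivative (\<Sum>i<n1. suffT (X1 i) j)) (at 0)"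
    by (rule DERIV_sum) (auto intro!: derivative_eq_intros)
  show ?thesis
    unfolding grad_def lossL_def ip_add_coordinate[OF j]
    by (rule DERIV_imp_deriv, rule DERIV_add[OF DERIV_cmult[OF linear] has_real_derivative_ln_mean_exp[OF n2]])
qed

lemma grad_lossL_ratio:
  assumes j: "j \<in> idx p" and n2: "1 \<le> n2"
  shows "grad (lossL p n1 n2 X1 X2) d j =
     - (1 / real n1) * (\<Sum>i<n1. suffT (X1 i) j)
     + (\<Sum>i<n2. ratio p \<theta> d (X2 i) * suffT (X2 i) j) / (\<Sum>i<n2. ratio p \<theta> d (X2 i))"
  using Zr_pos[of p \<theta> d]
  by (simp add: grad_lossL[OF j n2] ratio_def sum_divide_distrib[symmetric])

lemma abs_grad_lossL_le_2:
  assumes n1: "1 \<le> n1" and n2: "1 \<le> n2" and X1: "X1 \<in> samples p n1" and X2: "X2 \<in> samples p n2"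
    and j: "j \<in> idx p"
  shows "\<bar>grad (lossL p n1 n2 X1 X2) d j\<bar> \<le> 2"
proof -
  define r where "r = ratio p \<theta>2 d"
  have T1: "\<bar>suffT (X1 i) j\<bar> \<le> 1" if "i < n1" for i
    using abs_suffT_le_1[OF _ j] X1 that by (auto simp: samples_def PiE_iff)
  have T2: "\<bar>suffT (X2 i) j\<bar> \<le> 1" if "i < n2" for i
    using abs_suffT_le_1[OF _ j] X2 that by (auto simp: samples_def PiE_iff)
  have "\<bar>\<Sum>i<n1. suffT (X1 i) j\<bar> \<le> (\<Sum>i<n1. 1)"
    using T1 by (intro order_trans[OF sum_abs] sum_mono) auto
  then have mean1: "\<bar>- (1 / real n1) * (\<Sum>i<n1. suffT (X1 i) j)\<bar> \<le> 1"
    using n1 by (simp add: abs_mult divide_le_eq)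
  have R: "0 < (\<Sum>i<n2. r (X2 i))"
    using n2 ratio_pos by (intro sum_pos) (auto simp: r_def lessThan_empty_iff)
  have "\<bar>\<Sum>i<n2. r (X2 i) * suffT (X2 i) j\<bar> \<le> (\<Sum>i<n2. \<bar>r (X2 i) * suffT (X2 i) j\<bar>)"
    by (rule sum_abs)
  also have "\<dots> \<le> (\<Sum>i<n2. r (X2 i))"
  proof (intro sum_mono)
    fix i assume "i \<in> {..<n2}"
    then show "\<bar>r (X2 i) * suffT (X2 i) j\<bar> \<le> r (X2 i)"
      using T2[of i] ratio_pos[of p \<theta>2 d "X2 i"] by (simp add: r_def abs_mult mult_left_le)
  qed
  finally have "\<bar>(\<Sum>i<n2. r (X2 i) * suffT (X2 i) j) / (\<Sum>i<n2. r (X2 i))\<bar> \<le> 1"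
    using R by (simp add: divide_le_eq)
  then show ?thesis
    using mean1 unfolding grad_lossL_ratio[OF j n2, where \<theta>=\<theta>2] r_def by linarith
qed

lemma abs_grad_lossL_le:
  fixes \<mu> :: real
  assumes j: "j \<in> idx p" and n1: "1 \<le> n1" and n2: "1 \<le> n2" and s2: "0 \<le> s2"
    and dev1: "\<bar>\<Sum>i<n1. suffT (X1 i) j - \<mu>\<bar> < real n1 * s1"
    and mass: "(\<Sum>i<n2. 1 - ratio p \<theta>2 d (X2 i)) < real n2 * (1/2)"
    and dev2: "\<bar>\<Sum>i<n2. ratio p \<theta>2 d (X2 i) * (suffT (X2 i) j - \<mu>)\<bar> < real n2 * s2"
  shows "\<bar>grad (lossL p n1 n2 X1 X2) d j\<bar> \<le> s1 + 2 * s2"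
proof -
  define r where "r = ratio p \<theta>2 d"
  define A where "A = (\<Sum>i<n1. suffT (X1 i) j)"
  define B where "B = (\<Sum>i<n2. r (X2 i) * suffT (X2 i) j)"
  define R where "R = (\<Sum>i<n2. r (X2 i))"
  have "\<bar>A - real n1 * \<mu>\<bar> < real n1 * s1"
    using dev1 by (simp add: A_def sum_subtractf)
  then have first: "\<bar>- (1 / real n1) * A + \<mu>\<bar> \<le> s1"
    using n1 by (simp add: abs_minus_commute divide_le_eq field_simps)
  have R_gt: "real n2 / 2 < R"
    using mass by (simp add: R_def r_def sum_subtractf)
  have "\<bar>B - \<mu> * R\<bar> < real n2 * s2"
    using dev2 by (simp add: B_def R_def r_def sum_subtractf right_diff_distrib sum_distrib_left mult.commute)
  also have "\<dots> \<le> 2 * R * s2"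
    using R_gt s2 by (intro mult_right_mono) auto
  moreover have "\<bar>B / R - \<mu>\<bar> = \<bar>B - \<mu> * R\<bar> / R"
    using R_gt by (simp add: abs_div_pos[symmetric] field_simps)
  ultimately have "\<bar>B / R - \<mu>\<bar> \<le> 2 * s2"
    using R_gt by (simp add: divide_le_eq mult.commute mult.left_commute)
  moreover have "grad (lossL p n1 n2 X1 X2) d j = (- (1 / real n1) * A + \<mu>) + (B / R - \<mu>)"
    unfolding grad_lossL_ratio[OF j n2, where \<theta>=\<theta>2] A_def B_def R_def r_def by simp
  ultimately show ?thesis using first by linarith
qed

section \<open>Concentration of the gradient\<close>

lemma prob_samples_nonneg: "0 \<le> prob_samples p \<theta>1 \<theta>2 n1 n2 E"
  unfolding prob_samples_def
  by (intro sum_nonneg) (auto intro!: mult_nonneg_nonneg prod_nonneg simp: less_imp_le ising_pos)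

lemma prob_samples_ge_product:
  assumes "\<And>X1 X2. X1 \<in> samples p n1 \<Longrightarrow> X2 \<in> samples p n2 \<Longrightarrow> G1 X1 \<Longrightarrow> G2 X2 \<Longrightarrow> E X1 X2"
  shows "iid_prob (configs p) (ising p \<theta>1) n1 G1 * iid_prob (configs p) (ising p \<theta>2) n2 G2
    \<le> prob_samples p \<theta>1 \<theta>2 n1 n2 E"
proof -
  have "iid_prob (configs p) (ising p \<theta>1) n1 G1 * iid_prob (configs p) (ising p \<theta>2) n2 G2
    = (\<Sum>X1\<in>samples p n1. \<Sum>X2\<in>samples p n2.
         (if G1 X1 then \<Prod>i<n1. ising p \<theta>1 (X1 i) else 0) * (if G2 X2 then \<Prod>i<n2. ising p \<theta>2 (X2 i) else 0))"
    unfolding iid_prob_def samples_def by (rule sum_product)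
  also have "\<dots> \<le> prob_samples p \<theta>1 \<theta>2 n1 n2 E"
    unfolding prob_samples_def
  proof (intro sum_mono)
    fix X1 X2 assume X1: "X1 \<in> samples p n1" and X2: "X2 \<in> samples p n2"
    have "0 \<le> (\<Prod>i<n1. ising p \<theta>1 (X1 i))" "0 \<le> (\<Prod>i<n2. ising p \<theta>2 (X2 i))"
      using prod_weights_nonneg[OF ising_nonneg] X1 X2 by (auto simp: samples_def)
    then show "(if G1 X1 then \<Prod>i<n1. ising p \<theta>1 (X1 i) else 0) * (if G2 X2 then \<Prod>i<n2. ising p \<theta>2 (X2 i) else 0)
      \<le> (if E X1 X2 then (\<Prod>i<n1. ising p \<theta>1 (X1 i)) * (\<Prod>i<n2. ising p \<theta>2 (X2 i)) else 0)"
      using assms[OF X1 X2] by auto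
  qed
  finally show ?thesis .
qed

lemma one_minus_add_le_mult:
  fixes a b x y :: real
  assumes "1 - x \<le> a" "1 - y \<le> b" "0 \<le> a" "0 \<le> b" "0 \<le> x" "0 \<le> y"
  shows "1 - (x + y) \<le> a * b"
proof (cases "x \<le> 1 \<and> y \<le> 1")
  case True
  then have "(1 - x) * (1 - y) \<le> a * b" using assms by (intro mult_mono) auto
  moreover have "0 \<le> x * y" using assms by simp
  ultimately show ?thesis by (simp add: algebra_simps)
next
  case False
  then show ?thesis using assms by (smt (verit) mult_nonneg_nonneg)
qed

lemma smooth_ratio_mgf:
  assumes "smooth_ratio p \<theta>1 \<theta>2"
  shows "(\<Sum>x\<in>configs p. ising p \<theta>2 x * exp (\<epsilon> * (ratio p \<theta>2 (\<lambda>i. \<theta>1 i - \<theta>2 i) x - 1)))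
    \<le> exp (\<epsilon>^2)"
proof -
  have "norm2 p (\<lambda>_. 0) \<le> norm2 p (\<lambda>i. \<theta>1 i - \<theta>2 i)"
    by (simp add: norm2_def sum_nonneg)
  then have "Eising p \<theta>2 (\<lambda>x. exp (\<epsilon> * (ratio p \<theta>2 (\<lambda>i. \<theta>1 i - \<theta>2 i + 0) x - 1))) \<le> exp (\<epsilon>^2)"
    using assms unfolding smooth_ratio_def by blast
  then show ?thesis by (simp add: Eising_def)
qed

lemma Eising_exp_half_ratio_le_3:
  assumes "smooth_ratio p \<theta>1 \<theta>2"
  shows "(\<Sum>x\<in>configs p. ising p \<theta>2 x * exp (ratio p \<theta>2 (\<lambda>i. \<theta>1 i - \<theta>2 i) x / 2)) \<le> 3"
proof -
  define r where "r = ratio p \<theta>2 (\<lambda>i. \<theta>1 i - \<theta>2 i)"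
  have "exp (r x / 2) = exp (1/2) * exp (1/2 * (r x - 1))" for x
    by (simp add: exp_add[symmetric] field_simps)
  then have "(\<Sum>x\<in>configs p. ising p \<theta>2 x * exp (r x / 2))
      = exp (1/2) * (\<Sum>x\<in>configs p. ising p \<theta>2 x * exp (1/2 * (r x - 1)))"
    by (simp add: sum_distrib_left mult.left_commute)
  also have "\<dots> \<le> exp (1/2) * exp ((1/2)^2)"
    using smooth_ratio_mgf[OF assms, of "1/2"] unfolding r_def by (intro mult_left_mono) auto
  also have "\<dots> \<le> exp 1"
    by (simp add: exp_add[symmetric] power2_eq_square)
  also have "\<dots> \<le> 3"
    by (rule exp_le)
  finally show ?thesis unfolding r_def .
qed

text \<open>Moment conditions for the Chernoff bound with variance proxy \<open>K = 300\<close>; the restriction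
  \<open>s \<le> 75\<close> keeps the exponent below 1, resp. below \<open>r/4\<close>.\<close>

lemma square_mult_exp_le_12:
  fixes y s :: real
  assumes "\<bar>y\<bar> \<le> 2" "0 \<le> s" "s \<le> 75"
  shows "y^2 * exp \<bar>s / (2*300) * y\<bar> \<le> 12"
proof -
  have "y^2 \<le> 4"
    using power_mono[OF assms(1) abs_ge_zero, of 2] by simp
  moreover have "\<bar>s / (2*300) * y\<bar> \<le> 1"
    using assms mult_mono[of s 75 "\<bar>y\<bar>" 2] by (simp add: abs_mult)
  then have "exp \<bar>s / (2*300) * y\<bar> \<le> exp 1"
    by simp
  then have "exp \<bar>s / (2*300) * y\<bar> \<le> 3"
    using exp_le by linarith
  ultimately show ?thesis
    using mult_mono[of "y^2" 4 "exp \<bar>s / (2*300) * y\<bar>" 3] by simp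
qed

text \<open>The factor \<open>r\<^sup>2 exp (r/4)\<close> is absorbed into \<open>exp (r/2)\<close>, whose mean the smooth density
  ratio assumption controls.\<close>

lemma square_mult_exp_le_exp_half:
  fixes r y s :: real
  assumes "0 < r" "\<bar>y\<bar> \<le> 2 * r" "0 \<le> s" "s \<le> 75"
  shows "y^2 * exp \<bar>s / (2*300) * y\<bar> \<le> 128 * exp (r / 2)"
proof -
  have "y^2 \<le> 4 * r^2"
    using assms(1,2) abs_le_square_iff[of y "2 * r"] by (simp add: power_mult_distrib)
  also have "\<dots> \<le> 4 * (32 * exp (r / 4))"
    using half_square_le_exp[of "r / 4"] assms(1) by (simp add: power_divide)
  finally have y2: "y^2 \<le> 128 * exp (r / 4)" by simp
  have "\<bar>s / (2*300) * y\<bar> \<le> r / 4"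
    using assms mult_mono[of s 75 "\<bar>y\<bar>" "2 * r"] by (simp add: abs_mult)
  then have "exp \<bar>s / (2*300) * y\<bar> \<le> exp (r / 4)" by simp
  then have "y^2 * exp \<bar>s / (2*300) * y\<bar> \<le> 128 * exp (r / 4) * exp (r / 4)"
    using y2 by (intro mult_mono) auto
  also have "\<dots> = 128 * exp (r / 2)"
    by (simp add: exp_add[symmetric])
  finally show ?thesis .
qed

lemma sample_deviation_prob:
  assumes s: "0 \<le> s" "s \<le> 75"
  shows "iid_prob (configs p) (ising p \<theta>) n
      (\<lambda>X. \<exists>j\<in>idx p. real n * s \<le> \<bar>\<Sum>i<n. suffT (X i) j - Eising p \<theta> (\<lambda>x. suffT x j)\<bar>)
    \<le> real p^2 * (2 * exp (- real n * s^2 / 1200))"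
proof -
  define f where "f j x = suffT x j - Eising p \<theta> (\<lambda>x. suffT x j)" for j x
  have moment: "(\<Sum>x\<in>configs p. ising p \<theta> x * ((f j x)^2 * exp \<bar>s / (2*300) * f j x\<bar>)) \<le> 2 * 300"
    if j: "j \<in> idx p" for j
  proof -
    have "\<bar>f j x\<bar> \<le> 2" if "x \<in> configs p" for x
      unfolding f_def using that j by (rule abs_centered_suffT_le_2)
    then have "(\<Sum>x\<in>configs p. ising p \<theta> x * ((f j x)^2 * exp \<bar>s / (2*300) * f j x\<bar>))
        \<le> (\<Sum>x\<in>configs p. ising p \<theta> x * 12)"
      using square_mult_exp_le_12[OF _ s] ising_nonneg by (intro sum_mono mult_left_mono) auto
    also have "\<dots> = 12"
      using sum_ising by (simp add: sum_distrib_right[symmetric])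
    finally show ?thesis by simp
  qed
  have mean: "(\<Sum>x\<in>configs p. ising p \<theta> x * f j x) = 0" for j
    unfolding f_def by (rule Eising_centered)
  have "iid_prob (configs p) (ising p \<theta>) n (\<lambda>X. \<exists>j\<in>idx p. real n * s \<le> \<bar>\<Sum>i<n. f j (X i)\<bar>)
    \<le> real (card (idx p)) * (2 * exp (- real n * s^2 / (4*300)))"
    by (rule uniform_chernoff_abs_tail[OF finite_configs ising_nonneg sum_ising finite_idx _ s(1) mean moment])
      simp
  then show ?thesis by (simp add: f_def card_idx)
qed

lemma reweighted_deviation_prob:
  assumes sm: "smooth_ratio p \<theta>1 \<theta>2" and s: "0 \<le> s" "s \<le> 75"
  shows "iid_prob (configs p) (ising p \<theta>2) n
      (\<lambda>X. \<exists>j\<in>idx p. real n * s \<le>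
         \<bar>\<Sum>i<n. ratio p \<theta>2 (\<lambda>i. \<theta>1 i - \<theta>2 i) (X i) * (suffT (X i) j - Eising p \<theta>1 (\<lambda>x. suffT x j))\<bar>)
    \<le> real p^2 * (2 * exp (- real n * s^2 / 1200))"
proof -
  define r where "r = ratio p \<theta>2 (\<lambda>i. \<theta>1 i - \<theta>2 i)"
  define f where "f j x = r x * (suffT x j - Eising p \<theta>1 (\<lambda>x. suffT x j))" for j x
  have mean: "(\<Sum>x\<in>configs p. ising p \<theta>2 x * f j x) = 0" for j
    using Eising_centered[of p \<theta>1 "\<lambda>x. suffT x j"]
    by (simp add: f_def r_def mult.assoc[symmetric] ising_mult_ratio)
  have moment: "(\<Sum>x\<in>configs p. ising p \<theta>2 x * ((f j x)^2 * exp \<bar>s / (2*300) * f j x\<bar>)) \<le> 2 * 300"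
    if j: "j \<in> idx p" for j
  proof -
    have "\<bar>f j x\<bar> \<le> 2 * r x" if "x \<in> configs p" for x
    proof -
      have pos: "0 < r x" unfolding r_def by (rule ratio_pos)
      have "r x * \<bar>suffT x j - Eising p \<theta>1 (\<lambda>x. suffT x j)\<bar> \<le> r x * 2"
        using abs_centered_suffT_le_2[OF that j] pos by (intro mult_left_mono) auto
      then show ?thesis
        using pos by (simp add: f_def abs_mult mult.commute)
    qed
    then have "(\<Sum>x\<in>configs p. ising p \<theta>2 x * ((f j x)^2 * exp \<bar>s / (2*300) * f j x\<bar>))
        \<le> (\<Sum>x\<in>configs p. ising p \<theta>2 x * (128 * exp (r x / 2)))"
      using square_mult_exp_le_exp_half[OF ratio_pos _ s] ising_nonneg
      by (intro sum_mono mult_left_mono) (auto simp: r_def)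
    also have "\<dots> = 128 * (\<Sum>x\<in>configs p. ising p \<theta>2 x * exp (r x / 2))"
      by (simp add: sum_distrib_left algebra_simps)
    also have "\<dots> \<le> 128 * 3"
      using Eising_exp_half_ratio_le_3[OF sm] by (simp add: r_def)
    finally show ?thesis by simp
  qed
  have "iid_prob (configs p) (ising p \<theta>2) n (\<lambda>X. \<exists>j\<in>idx p. real n * s \<le> \<bar>\<Sum>i<n. f j (X i)\<bar>)
    \<le> real (card (idx p)) * (2 * exp (- real n * s^2 / (4*300)))"
    by (rule uniform_chernoff_abs_tail[OF finite_configs ising_nonneg sum_ising finite_idx _ s(1) mean moment])
      simp
  then show ?thesis by (simp add: f_def r_def card_idx)
qed

lemma ratio_mass_deficit_prob:
  assumes sm: "smooth_ratio p \<theta>1 \<theta>2"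
  shows "iid_prob (configs p) (ising p \<theta>2) n
      (\<lambda>X. real n * (1/2) \<le> (\<Sum>i<n. 1 - ratio p \<theta>2 (\<lambda>i. \<theta>1 i - \<theta>2 i) (X i)))
    \<le> exp (- real n / 16)"
proof -
  define r where "r = ratio p \<theta>2 (\<lambda>i. \<theta>1 i - \<theta>2 i)"
  have "(\<Sum>x\<in>configs p. ising p \<theta>2 x * exp ((1/2) / (2*1) * (1 - r x)))
      = (\<Sum>x\<in>configs p. ising p \<theta>2 x * exp (- (1/4) * (r x - 1)))"
    by (intro sum.cong refl) (simp add: field_simps)
  also have "\<dots> \<le> exp (1 * ((1/2) / (2*1))^2)"
    using smooth_ratio_mgf[OF sm, of "- (1/4)"] by (simp add: r_def power2_eq_square)
  finally have "iid_prob (configs p) (ising p \<theta>2) n (\<lambda>X. real n * (1/2) \<le> (\<Sum>i<n. 1 - r (X i)))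
      \<le> exp (- real n * (1/2)^2 / (4*1))"
    by (intro chernoff_upper_tail[OF finite_configs ising_nonneg]) auto
  then show ?thesis by (simp add: r_def power2_eq_square)
qed

lemma prob_supnorm_grad_le:
  assumes p: "1 \<le> p" and n1: "1 \<le> n1" and n2: "1 \<le> n2" and sm: "smooth_ratio p \<theta>1 \<theta>2"
    and s1: "0 \<le> s1" "s1 \<le> 75" and s2: "0 \<le> s2" "s2 \<le> 75" and b: "s1 + 2 * s2 \<le> b"
  shows "1 - (2 * real p^2 * exp (- real n1 * s1^2 / 1200)
      + (2 * real p^2 * exp (- real n2 * s2^2 / 1200) + exp (- real n2 / 16)))
    \<le> prob_samples p \<theta>1 \<theta>2 n1 n2
      (\<lambda>X1 X2. supnorm p (grad (lossL p n1 n2 X1 X2) (\<lambda>i. \<theta>1 i - \<theta>2 i)) \<le> b)"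
proof -
  define \<mu> where "\<mu> j = Eising p \<theta>1 (\<lambda>x. suffT x j)" for j
  define r where "r = ratio p \<theta>2 (\<lambda>i. \<theta>1 i - \<theta>2 i)"
  define dev1 where "dev1 X \<longleftrightarrow> (\<exists>j\<in>idx p. real n1 * s1 \<le> \<bar>\<Sum>i<n1. suffT (X i) j - \<mu> j\<bar>)" for X
  define mass where "mass X \<longleftrightarrow> real n2 * (1/2) \<le> (\<Sum>i<n2. 1 - r (X i))" for X
  define dev2 where
    "dev2 X \<longleftrightarrow> (\<exists>j\<in>idx p. real n2 * s2 \<le> \<bar>\<Sum>i<n2. r (X i) * (suffT (X i) j - \<mu> j)\<bar>)" for X
  let ?P1 = "iid_prob (configs p) (ising p \<theta>1) n1"
  let ?P2 = "iid_prob (configs p) (ising p \<theta>2) n2"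
  have good1: "1 - 2 * real p^2 * exp (- real n1 * s1^2 / 1200) \<le> ?P1 (\<lambda>X. \<not> dev1 X)"
    using sample_deviation_prob[OF s1, of p \<theta>1 n1]
    unfolding iid_prob_compl[OF finite_configs sum_ising] dev1_def \<mu>_def by simp
  have "?P2 (\<lambda>X. mass X \<or> dev2 X) \<le> ?P2 mass + ?P2 dev2"
    by (rule iid_prob_disj_le[OF ising_nonneg])
  also have "\<dots> \<le> exp (- real n2 / 16) + 2 * real p^2 * exp (- real n2 * s2^2 / 1200)"
    using ratio_mass_deficit_prob[OF sm, of n2] reweighted_deviation_prob[OF sm s2, of n2]
    unfolding mass_def dev2_def r_def \<mu>_def by simp
  finally have good2: "1 - (2 * real p^2 * exp (- real n2 * s2^2 / 1200) + exp (- real n2 / 16))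
      \<le> ?P2 (\<lambda>X. \<not> (mass X \<or> dev2 X))"
    unfolding iid_prob_compl[OF finite_configs sum_ising] by simp
  have "?P1 (\<lambda>X. \<not> dev1 X) * ?P2 (\<lambda>X. \<not> (mass X \<or> dev2 X))
    \<le> prob_samples p \<theta>1 \<theta>2 n1 n2
      (\<lambda>X1 X2. supnorm p (grad (lossL p n1 n2 X1 X2) (\<lambda>i. \<theta>1 i - \<theta>2 i)) \<le> b)"
  proof (rule prob_samples_ge_product)
    fix X1 X2 assume good: "\<not> dev1 X1" "\<not> (mass X2 \<or> dev2 X2)"
    show "supnorm p (grad (lossL p n1 n2 X1 X2) (\<lambda>i. \<theta>1 i - \<theta>2 i)) \<le> b"
    proof (intro supnorm_le[OF p] ballI)
      fix j assume j: "j \<in> idx p"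
      have "\<bar>grad (lossL p n1 n2 X1 X2) (\<lambda>i. \<theta>1 i - \<theta>2 i) j\<bar> \<le> s1 + 2 * s2"
        by (rule abs_grad_lossL_le[OF j n1 n2 s2(1), where \<mu>="\<mu> j"])
          (use good j in \<open>auto simp: dev1_def mass_def dev2_def r_def not_le\<close>)
      with b show "\<bar>grad (lossL p n1 n2 X1 X2) (\<lambda>i. \<theta>1 i - \<theta>2 i) j\<bar> \<le> b" by linarith
    qed
  qed
  moreover have "1 - (2 * real p^2 * exp (- real n1 * s1^2 / 1200)
      + (2 * real p^2 * exp (- real n2 * s2^2 / 1200) + exp (- real n2 / 16)))
    \<le> ?P1 (\<lambda>X. \<not> dev1 X) * ?P2 (\<lambda>X. \<not> (mass X \<or> dev2 X))"
    by (rule one_minus_add_le_mult[OF good1 good2 iid_prob_nonneg[OF ising_nonneg] iid_prob_nonneg[OF ising_nonneg]])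
      simp_all
  ultimately show ?thesis by linarith
qed

lemma prob_supnorm_grad_le_of_ge_2:
  assumes p: "1 \<le> p" and n1: "1 \<le> n1" and n2: "1 \<le> n2" and b: "2 \<le> b"
  shows "1 \<le> prob_samples p \<theta>1 \<theta>2 n1 n2
      (\<lambda>X1 X2. supnorm p (grad (lossL p n1 n2 X1 X2) (\<lambda>i. \<theta>1 i - \<theta>2 i)) \<le> b)"
proof -
  have "iid_prob (configs p) (ising p \<theta>1) n1 (\<lambda>_. True) * iid_prob (configs p) (ising p \<theta>2) n2 (\<lambda>_. True)
    \<le> prob_samples p \<theta>1 \<theta>2 n1 n2
      (\<lambda>X1 X2. supnorm p (grad (lossL p n1 n2 X1 X2) (\<lambda>i. \<theta>1 i - \<theta>2 i)) \<le> b)"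
  proof (rule prob_samples_ge_product)
    fix X1 X2 assume "X1 \<in> samples p n1" "X2 \<in> samples p n2"
    from abs_grad_lossL_le_2[OF n1 n2 this]
    show "supnorm p (grad (lossL p n1 n2 X1 X2) (\<lambda>i. \<theta>1 i - \<theta>2 i)) \<le> b"
      using b by (intro supnorm_le[OF p]) (meson order_trans)
  qed
  then show ?thesis by (simp add: iid_prob_True[OF finite_configs sum_ising])
qed

lemma union_tail_at_log_scale:
  assumes "2 \<le> p" "1 \<le> k"
  shows "2 * real p^2 * exp (- real k * (60 * sqrt (ln (real p) / real k))^2 / 1200) = 2 / real p"
proof -
  have "- real k * (60 * sqrt (ln (real p) / real k))^2 / 1200 = - (3 * ln (real p))"
    using assms by (simp add: power_mult_distrib)
  moreover have "exp (3 * ln (real p)) = real p ^ 3"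
    using exp_of_nat_mult[of 3 "ln (real p)"] assms(1) by simp
  ultimately show ?thesis
    using assms(1) by (simp add: exp_minus inverse_eq_divide power2_eq_square power3_eq_cube)
qed

lemma prob_supnorm_grad_le_sqrt_log:
  assumes p: "2 \<le> p" and n1: "1 \<le> n1" and n2: "1 \<le> n2" and sm: "smooth_ratio p \<theta>1 \<theta>2"
    and small: "sqrt (ln (real p) / real (min n1 n2)) \<le> 1/90"
  shows "1 - 5 / real p \<le> prob_samples p \<theta>1 \<theta>2 n1 n2
      (\<lambda>X1 X2. supnorm p (grad (lossL p n1 n2 X1 X2) (\<lambda>i. \<theta>1 i - \<theta>2 i))
         \<le> 180 * sqrt (ln (real p) / real (min n1 n2)))"
proof -
  define L where "L = ln (real p)"
  define n where "n = min n1 n2"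
  define s where "s k = 60 * sqrt (L / real k)" for k
  have L: "0 < L" using p by (simp add: L_def)
  have n: "1 \<le> n" "n \<le> n1" "n \<le> n2" using n1 n2 by (auto simp: n_def)
  have s_le: "s k \<le> 60 * sqrt (L / real n)" if "n \<le> k" for k
    using that n(1) L by (simp add: s_def divide_left_mono)
  have s_nonneg: "0 \<le> s k" for k
    using L by (simp add: s_def)
  have s_small: "s k \<le> 75" if "n \<le> k" for k
    using s_le[OF that] small unfolding L_def n_def by linarith
  have mass: "exp (- real n2 / 16) \<le> 1 / real p"
  proof -
    have "L / real n \<le> (1/90)^2"
      using sqrt_le_D[OF small] unfolding L_def n_def .
    then have "L \<le> real n2 / 16"
      using n(1) of_nat_mono[OF n(3)] by (simp add: power2_eq_square divide_le_eq)
    then have "exp (- real n2 / 16) \<le> exp (- L)" by simp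
    also have "\<dots> = 1 / real p"
      using p by (simp add: L_def exp_minus inverse_eq_divide)
    finally show ?thesis .
  qed
  have "s n1 + 2 * s n2 \<le> 180 * sqrt (L / real n)"
    using s_le[OF n(2)] s_le[OF n(3)] by linarith
  from prob_supnorm_grad_le[OF _ n1 n2 sm s_nonneg s_small[OF n(2)] s_nonneg s_small[OF n(3)] this]
  have "1 - (2 / real p + (2 / real p + exp (- real n2 / 16)))
    \<le> prob_samples p \<theta>1 \<theta>2 n1 n2
      (\<lambda>X1 X2. supnorm p (grad (lossL p n1 n2 X1 X2) (\<lambda>i. \<theta>1 i - \<theta>2 i)) \<le> 180 * sqrt (L / real n))"
    using p unfolding s_def L_def union_tail_at_log_scale[OF p n1] union_tail_at_log_scale[OF p n2] by simp
  moreover have "5 / real p = 2 / real p + (2 / real p + 1 / real p)"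
    by (simp add: divide_simps)
  ultimately show ?thesis using mass unfolding L_def n_def by linarith
qed

theorem corollary1:
  shows "\<exists>\<eta>2>0. \<exists>c>0. \<forall>(p::nat) (\<theta>1::param) (\<theta>2::param) (n1::nat) (n2::nat) (\<eta>0::real).
    p \<ge> 1 \<and> n1 \<ge> 1 \<and> n2 \<ge> 1 \<and>
    smooth_ratio p \<theta>1 \<theta>2 \<and>
    (\<forall>X1\<in>samples p n1. \<forall>X2\<in>samples p n2. \<forall>u::param.
        norm2 p u \<le> norm2 p (\<lambda>i. \<theta>1 i - \<theta>2 i) \<longrightarrow>
        lambda_max (idx p) (hess (lossL p n1 n2 X1 X2) (\<lambda>i. \<theta>1 i - \<theta>2 i + u i)) / 2 \<le> \<eta>0)
    \<longrightarrow>
    prob_samples p \<theta>1 \<theta>2 n1 n2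
      (\<lambda>X1 X2. supnorm p (grad (lossL p n1 n2 X1 X2) (\<lambda>i. \<theta>1 i - \<theta>2 i))
                 \<le> \<eta>2 * sqrt (ln (real p)) / sqrt (real (min n1 n2)))
    \<ge> 1 - c / real p"
proof (rule exI[of _ 180], rule conjI, simp, rule exI[of _ 5], rule conjI, simp, intro allI impI, elim conjE)
  fix p n1 n2 :: nat and \<theta>1 \<theta>2 :: param
  assume p: "1 \<le> p" and n1: "1 \<le> n1" and n2: "1 \<le> n2" and sm: "smooth_ratio p \<theta>1 \<theta>2"
  let ?B = "180 * sqrt (ln (real p)) / sqrt (real (min n1 n2))"
  let ?prob = "prob_samples p \<theta>1 \<theta>2 n1 n2
    (\<lambda>X1 X2. supnorm p (grad (lossL p n1 n2 X1 X2) (\<lambda>i. \<theta>1 i - \<theta>2 i)) \<le> ?B)"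
  have B: "?B = 180 * sqrt (ln (real p) / real (min n1 n2))"
    by (simp add: real_sqrt_divide)
  consider "p = 1" | "2 \<le> ?B" | "2 \<le> p" "?B < 2"
    using p by linarith
  then show "1 - 5 / real p \<le> ?prob"
  proof cases
    case 1
    have "0 \<le> ?prob" by (rule prob_samples_nonneg)
    then show ?thesis using 1 by simp
  next
    case 2
    have "1 \<le> ?prob" by (rule prob_supnorm_grad_le_of_ge_2[OF p n1 n2 2])
    moreover have "0 \<le> 5 / real p" by simp
    ultimately show ?thesis by linarith
  next
    case 3
    have "sqrt (ln (real p) / real (min n1 n2)) \<le> 1/90"
      using 3(2) unfolding B by simp
    from prob_supnorm_grad_le_sqrt_log[OF 3(1) n1 n2 sm this] show ?thesis
      unfolding B .
  qed
qed

end
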